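(* Let $\lambda>1$, $L=\ln\lambda$, and let $\alpha$ be Diophantine with constants $\kappa,\tau>0$. Fix $\Gamma$ with $L<\Gamma\le 2L$. For $n\in\mathbb{Z}$ let $$\Theta_1=\{\theta\in[0,1]:\ e^{-2\Gamma|n|}\le|\sin\pi(2\theta+n\alpha)|\le e^{-\Gamma|n|}\},$$ $$\Theta_2=\{\theta\in[0,1]:\ \text{there exists } k\in\mathbb{Z},\ |k|\ge 1000|n|,\ \text{with } |\sin\pi(2\theta+k\alpha)|\le e^{-\frac{L}{100}|k|}\},$$ and $\Theta=\Theta_1\setminus\Theta_2$. Then there is a constant $C=C(\kappa,\tau)$ such that, for $|n|$ sufficiently large, for every $\theta\in\Theta$ and every $m>C|n|$, $$\min_{|x|\le m}|\sin\pi(2\theta+x\alpha)|\ge e^{-\frac{L}{100}|m|}.$$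
   Context: The frequency $\alpha$ is Diophantine with constants $\kappa,\tau>0$ if $\|k\alpha\|_{\mathbb{R}/\mathbb{Z}}\ge \tau/|k|^{\kappa}$ for all integers $k\neq 0$, where $\|x\|_{\mathbb{R}/\mathbb{Z}}=\inf_{j\in\mathbb{Z}}|x-j|$. The minimum is over integers $x$. *)

theory Defs
  imports Complex_Main
begin

definition dist_Z :: "real \<Rightarrow> real" where
  "dist_Z x = (INF j::int. \<bar>x - of_int j\<bar>)"

definition diophantine :: "real \<Rightarrow> real \<Rightarrow> real \<Rightarrow> bool" where
  "diophantine \<kappa> \<tau> \<alpha> \<longleftrightarrow>
     (\<forall>k::int. k \<noteq> 0 \<longrightarrow> dist_Z (of_int k * \<alpha>) \<ge> \<tau> / \<bar>of_int k\<bar> powr \<kappa>)"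

definition Theta1 :: "real \<Rightarrow> real \<Rightarrow> int \<Rightarrow> real set" where
  "Theta1 \<Gamma> \<alpha> n = {\<theta> \<in> {0..1}.
      exp (-2 * \<Gamma> * \<bar>of_int n\<bar>) \<le> \<bar>sin (pi * (2 * \<theta> + of_int n * \<alpha>))\<bar> \<and>
      \<bar>sin (pi * (2 * \<theta> + of_int n * \<alpha>))\<bar> \<le> exp (- \<Gamma> * \<bar>of_int n\<bar>)}"

definition Theta2 :: "real \<Rightarrow> real \<Rightarrow> int \<Rightarrow> real set" where
  "Theta2 L \<alpha> n = {\<theta> \<in> {0..1}. \<exists>k::int. \<bar>k\<bar> \<ge> 1000 * \<bar>n\<bar> \<and>
      \<bar>sin (pi * (2 * \<theta> + of_int k * \<alpha>))\<bar> \<le> exp (- (L / 100) * \<bar>of_int k\<bar>)}"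

end

theory Submission
  imports Defs "HOL-Real_Asymp.Real_Asymp"
begin

text \<open>
  Split the range \<bar>x\<bar> \<le> m into three regimes. For \<bar>x\<bar> \<ge> 1000\<bar>n\<bar> the bound is exactly
  \<theta> \<notin> Theta2. For x = n it is the lower bound exp(-2\<Gamma>\<bar>n\<bar>) from Theta1, because
  2\<Gamma>\<bar>n\<bar> \<le> 4L\<bar>n\<bar> < L m / 100. For 0 < \<bar>x - n\<bar> \<le> 1001\<bar>n\<bar> the Diophantine condition keeps
  2\<theta> + x\<alpha> and 2\<theta> + n\<alpha> at distance at least \<tau> / (1001\<bar>n\<bar>)^\<kappa> modulo 1, and
  \<bar>sin \<pi>y\<bar> \<ge> (2/3) dist(y, \<int>), so the two sines cannot both be small. The second one is at
  most exp(-\<Gamma>\<bar>n\<bar>) \<le> exp(-L\<bar>n\<bar>), which for large \<bar>n\<bar> is negligible against that polynomial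
  bound, so the first one is at least exp(-L\<bar>n\<bar>) \<ge> exp(-L m / 100). Hence C = 1000 works.
\<close>

lemma sin_ge_third:
  fixes x :: real
  assumes "0 \<le> x" "x \<le> 2"
  shows "x / 3 \<le> sin x"
proof -
  have "\<bar>sin x - (\<Sum>m<3. sin_coeff m * x ^ m)\<bar> \<le> inverse (fact 3) * \<bar>x\<bar> ^ 3"
    by (rule Maclaurin_sin_bound)
  then have "\<bar>sin x - x\<bar> \<le> x ^ 3 / 6"
    using assms by (simp add: eval_nat_numeral sin_coeff_def fact_numeral)
  moreover have "x ^ 3 \<le> 4 * x"
    using assms mult_right_mono[of "x * x" 4 x] mult_mono[of x 2 x 2]
    by (simp add: power3_eq_cube)
  ultimately show ?thesis by linarith
qed

lemma abs_sin_pi_ge: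
  fixes t :: real
  assumes "\<bar>t\<bar> \<le> 1/2"
  shows "2/3 * \<bar>t\<bar> \<le> \<bar>sin (pi * t)\<bar>"
proof -
  have "pi * \<bar>t\<bar> \<le> pi * (1/2)"
    using assms by (intro mult_left_mono) auto
  then have "pi * \<bar>t\<bar> \<le> 2"
    using pi_less_4 by linarith
  then have "pi * \<bar>t\<bar> / 3 \<le> sin (pi * \<bar>t\<bar>)"
    by (intro sin_ge_third) auto
  moreover have "2 * \<bar>t\<bar> \<le> pi * \<bar>t\<bar>"
    using pi_ge_two by (intro mult_right_mono) auto
  moreover have "sin (pi * \<bar>t\<bar>) \<le> \<bar>sin (pi * t)\<bar>"
    by (cases "t \<ge> 0") auto
  ultimately show ?thesis by linarith
qed

lemma abs_sin_pi_add_of_int: "\<bar>sin (pi * (y + of_int j))\<bar> = \<bar>sin (pi * y)\<bar>"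
  by (simp add: distrib_left sin_add sin_int_times_real cos_int_times_real mult.commute)

lemma abs_sin_pi_ge_dist_round: "2/3 * \<bar>y - of_int (round y)\<bar> \<le> \<bar>sin (pi * y)\<bar>"
proof -
  have "\<bar>y - of_int (round y)\<bar> \<le> 1/2"
    using of_int_round_abs_le[of y] by linarith
  then have "2/3 * \<bar>y - of_int (round y)\<bar> \<le> \<bar>sin (pi * (y - of_int (round y)))\<bar>"
    by (rule abs_sin_pi_ge)
  also have "\<dots> = \<bar>sin (pi * y)\<bar>"
    using abs_sin_pi_add_of_int[of "y - of_int (round y)" "round y"] by simp
  finally show ?thesis .
qed

lemma dist_Z_le: "dist_Z y \<le> \<bar>y - of_int j\<bar>"
  unfolding dist_Z_def by (rule cINF_lower) (auto intro: bdd_belowI[where m = 0])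

lemma diophantine_abs_sin_sum_ge:
  assumes "diophantine \<kappa> \<tau> \<alpha>" "k \<noteq> 0" "u - v = of_int k * \<alpha>"
  shows "2/3 * (\<tau> / \<bar>of_int k\<bar> powr \<kappa>) \<le> \<bar>sin (pi * u)\<bar> + \<bar>sin (pi * v)\<bar>"
proof -
  define j where "j = round u - round v"
  have "\<tau> / \<bar>of_int k\<bar> powr \<kappa> \<le> dist_Z (of_int k * \<alpha>)"
    using assms(1,2) unfolding diophantine_def by auto
  also have "\<dots> \<le> \<bar>of_int k * \<alpha> - of_int j\<bar>"
    by (rule dist_Z_le)
  also have "\<dots> \<le> \<bar>u - of_int (round u)\<bar> + \<bar>v - of_int (round v)\<bar>"
    using assms(3) unfolding j_def by linarith
  finally show ?thesis
    using abs_sin_pi_ge_dist_round[of u] abs_sin_pi_ge_dist_round[of v] by linarith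
qed

lemma exp_beats_powr_eventually:
  fixes L \<kappa> c \<tau> :: real
  assumes "L > 0" "c > 0" "\<tau> > 0"
  shows "\<forall>\<^sub>F x in at_top. exp (- L * x) * (c * x) powr \<kappa> < \<tau>"
proof -
  have "((\<lambda>x. exp (- L * x) * (c * x) powr \<kappa>) \<longlongrightarrow> 0) at_top"
    using assms(1,2) by real_asymp
  then show ?thesis
    using assms(3) by (rule order_tendstoD)
qed

lemma abs_sin_gt_if_notin_Theta2:
  assumes "\<theta> \<in> {0..1}" "\<theta> \<notin> Theta2 L \<alpha> n" "1000 * \<bar>n\<bar> \<le> \<bar>k\<bar>"
  shows "exp (- (L / 100) * \<bar>of_int k\<bar>) < \<bar>sin (pi * (2 * \<theta> + of_int k * \<alpha>))\<bar>"
  using assms unfolding Theta2_def by force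

lemma abs_sin_ge_near_Theta1:
  assumes "diophantine \<kappa> \<tau> \<alpha>" "\<kappa> > 0" "L \<le> \<Gamma>" "\<theta> \<in> Theta1 \<Gamma> \<alpha> n"
    and "x \<noteq> n" "\<bar>x - n\<bar> \<le> 1001 * \<bar>n\<bar>"
    and small: "3 * exp (- L * \<bar>of_int n\<bar>) * (1001 * \<bar>of_int n\<bar>) powr \<kappa> < \<tau>"
  shows "exp (- L * \<bar>of_int n\<bar>) \<le> \<bar>sin (pi * (2 * \<theta> + of_int x * \<alpha>))\<bar>"
proof -
  define a where "a = \<bar>real_of_int n\<bar>"
  define k where "k = x - n"
  have "k \<noteq> 0" "\<bar>real_of_int k\<bar> \<le> 1001 * a"
    using assms(5,6) unfolding k_def a_def by linarith+
  moreover have "\<tau> > 0"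
    using small le_less_trans[of 0, OF _ small] by simp
  ultimately have "\<tau> / (1001 * a) powr \<kappa> \<le> \<tau> / \<bar>of_int k\<bar> powr \<kappa>"
    using \<open>\<kappa> > 0\<close> by (intro divide_left_mono powr_mono2 mult_pos_pos) (auto simp: a_def)
  moreover have "3 * exp (- L * a) \<le> \<tau> / (1001 * a) powr \<kappa>"
    using small assms(5,6) by (simp add: a_def pos_le_divide_eq)
  moreover have "2/3 * (\<tau> / \<bar>of_int k\<bar> powr \<kappa>)
      \<le> \<bar>sin (pi * (2 * \<theta> + of_int x * \<alpha>))\<bar> + \<bar>sin (pi * (2 * \<theta> + of_int n * \<alpha>))\<bar>"
    using \<open>k \<noteq> 0\<close> by (rule diophantine_abs_sin_sum_ge[OF assms(1)]) (simp add: k_def algebra_simps)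
  moreover have "\<bar>sin (pi * (2 * \<theta> + of_int n * \<alpha>))\<bar> \<le> exp (- \<Gamma> * a)"
    using assms(4) unfolding Theta1_def a_def by auto
  moreover have "exp (- \<Gamma> * a) \<le> exp (- L * a)"
    using assms(3) by (simp add: a_def mult_right_mono)
  ultimately show ?thesis
    unfolding a_def by linarith
qed

lemma abs_sin_orbit_ge:
  assumes "diophantine \<kappa> \<tau> \<alpha>" "\<kappa> > 0" "0 < L" "L < \<Gamma>" "\<Gamma> \<le> 2 * L"
    and \<theta>: "\<theta> \<in> Theta1 \<Gamma> \<alpha> n - Theta2 L \<alpha> n"
    and small: "3 * exp (- L * \<bar>of_int n\<bar>) * (1001 * \<bar>of_int n\<bar>) powr \<kappa> < \<tau>"
    and m: "1000 * \<bar>of_int n\<bar> < real_of_int m" and x: "\<bar>x\<bar> \<le> m"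
  shows "exp (- (L / 100) * real_of_int m) \<le> \<bar>sin (pi * (2 * \<theta> + of_int x * \<alpha>))\<bar>"
proof -
  have "\<theta> \<in> {0..1}"
    using \<theta> unfolding Theta1_def by auto
  consider "1000 * \<bar>n\<bar> \<le> \<bar>x\<bar>" | "x = n" | "x \<noteq> n" "\<bar>x - n\<bar> \<le> 1001 * \<bar>n\<bar>"
    by linarith
  then show ?thesis
  proof cases
    case 1
    have "exp (- (L / 100) * real_of_int m) \<le> exp (- (L / 100) * \<bar>of_int x\<bar>)"
      using x \<open>0 < L\<close> by (simp add: mult_left_mono)
    also have "\<dots> < \<bar>sin (pi * (2 * \<theta> + of_int x * \<alpha>))\<bar>"
      using \<theta> by (intro abs_sin_gt_if_notin_Theta2[where n = n] \<open>\<theta> \<in> {0..1}\<close> 1) simp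
    finally show ?thesis by simp
  next
    case 2
    have "2 * \<Gamma> * \<bar>of_int n\<bar> \<le> (L / 100) * real_of_int m"
      using m assms(3,5) mult_right_mono[of "2 * \<Gamma>" "4 * L" "\<bar>real_of_int n\<bar>"]
        mult_left_mono[of "400 * \<bar>real_of_int n\<bar>" "real_of_int m" L]
      by linarith
    then have "exp (- (L / 100) * real_of_int m) \<le> exp (-2 * \<Gamma> * \<bar>of_int n\<bar>)"
      by simp
    also have "\<dots> \<le> \<bar>sin (pi * (2 * \<theta> + of_int x * \<alpha>))\<bar>"
      using \<theta> 2 unfolding Theta1_def by auto
    finally show ?thesis .
  next
    case 3
    have "L * (100 * \<bar>of_int n\<bar>) \<le> L * real_of_int m"
      using m \<open>0 < L\<close> by (intro mult_left_mono) auto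
    then have "exp (- (L / 100) * real_of_int m) \<le> exp (- L * \<bar>of_int n\<bar>)"
      by simp
    also have "\<dots> \<le> \<bar>sin (pi * (2 * \<theta> + of_int x * \<alpha>))\<bar>"
      using \<theta> \<open>L < \<Gamma>\<close> abs_sin_ge_near_Theta1[OF assms(1,2) _ _ 3 small, of \<Gamma> \<theta>] by auto
    finally show ?thesis .
  qed
qed

theorem lemma4p2:
  fixes \<kappa> \<tau> :: real
  assumes "\<kappa> > 0" and "\<tau> > 0"
  shows "\<exists>C::real. \<forall>lam \<alpha> \<Gamma> :: real.
           lam > 1 \<longrightarrow> diophantine \<kappa> \<tau> \<alpha> \<longrightarrow>
           ln lam < \<Gamma> \<longrightarrow> \<Gamma> \<le> 2 * ln lam \<longrightarrow>
           (\<exists>N::int. \<forall>n::int. \<bar>n\<bar> \<ge> N \<longrightarrow>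
              (\<forall>\<theta> \<in> Theta1 \<Gamma> \<alpha> n - Theta2 (ln lam) \<alpha> n.
                 \<forall>m::int. real_of_int m > C * \<bar>of_int n\<bar> \<longrightarrow>
                   Min ((\<lambda>x::int. \<bar>sin (pi * (2 * \<theta> + of_int x * \<alpha>))\<bar>) ` {x. \<bar>x\<bar> \<le> m})
                     \<ge> exp (- (ln lam / 100) * \<bar>of_int m\<bar>)))"
proof (intro exI[of _ "1000::real"] allI impI)
  fix lam \<alpha> \<Gamma> :: real
  assume "lam > 1" "diophantine \<kappa> \<tau> \<alpha>" "ln lam < \<Gamma>" "\<Gamma> \<le> 2 * ln lam"
  have "ln lam > 0"
    using \<open>lam > 1\<close> by simp
  then obtain N0 where small: "\<And>x. x \<ge> N0 \<Longrightarrow> exp (- ln lam * x) * (1001 * x) powr \<kappa> < \<tau> / 3"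
    using exp_beats_powr_eventually[of "ln lam" 1001 "\<tau> / 3" \<kappa>] \<open>\<tau> > 0\<close>
    by (auto simp: eventually_at_top_linorder)
  show "\<exists>N::int. \<forall>n. \<bar>n\<bar> \<ge> N \<longrightarrow> (\<forall>\<theta> \<in> Theta1 \<Gamma> \<alpha> n - Theta2 (ln lam) \<alpha> n.
          \<forall>m. real_of_int m > 1000 * \<bar>of_int n\<bar> \<longrightarrow>
            Min ((\<lambda>x. \<bar>sin (pi * (2 * \<theta> + of_int x * \<alpha>))\<bar>) ` {x. \<bar>x\<bar> \<le> m})
              \<ge> exp (- (ln lam / 100) * \<bar>of_int m\<bar>))"
  proof (intro exI[of _ "\<lceil>N0\<rceil>"] allI impI ballI)
    fix n m :: int and \<theta> :: real
    assume "\<bar>n\<bar> \<ge> \<lceil>N0\<rceil>" and \<theta>: "\<theta> \<in> Theta1 \<Gamma> \<alpha> n - Theta2 (ln lam) \<alpha> n"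
      and m: "real_of_int m > 1000 * \<bar>of_int n\<bar>"
    then have "3 * exp (- ln lam * \<bar>of_int n\<bar>) * (1001 * \<bar>of_int n\<bar>) powr \<kappa> < \<tau>"
      using small[of "\<bar>of_int n\<bar>"] by (simp add: ceiling_le_iff)
    then have "\<forall>x \<in> {x. \<bar>x\<bar> \<le> m}.
        exp (- (ln lam / 100) * \<bar>of_int m\<bar>) \<le> \<bar>sin (pi * (2 * \<theta> + of_int x * \<alpha>))\<bar>"
      using abs_sin_orbit_ge[of \<kappa> \<tau> \<alpha> "ln lam" \<Gamma> \<theta> n m] m \<open>\<kappa> > 0\<close> \<open>ln lam > 0\<close> \<theta>
        \<open>diophantine \<kappa> \<tau> \<alpha>\<close> \<open>ln lam < \<Gamma>\<close> \<open>\<Gamma> \<le> 2 * ln lam\<close> by auto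
    moreover have "{x. \<bar>x\<bar> \<le> m} = {-m..m}" "m \<ge> 0"
      using m by auto
    ultimately show "Min ((\<lambda>x. \<bar>sin (pi * (2 * \<theta> + of_int x * \<alpha>))\<bar>) ` {x. \<bar>x\<bar> \<le> m})
        \<ge> exp (- (ln lam / 100) * \<bar>of_int m\<bar>)"
      by (simp add: Min_ge_iff)
  qed
qed

end
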